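(* For all positive integers $m\le k$ there exists a Boolean function $g:\{0,1\}^n\to\{0,1\}$ (for some $n$) with $s_0(g)=m$, $bs_0(g)=k$ and \[ C_1(g)=\left\lfloor \frac{3\lceil k/m\rceil}{2}\right\rfloor+1. \]
   Context: For $x\in\{0,1\}^n$ and $S\subseteq[n]$, $x^S$ denotes $x$ with all bits in $S$ flipped. $s(g,x)$ is the number of $i$ with $g(x)\neq g(x^{\{i\}})$ and $s_0(g)=\max\{s(g,x): g(x)=0\}$. $bs(g,x)$ is the maximum number of pairwise disjoint sets $B_1,\dots,B_b\subseteq[n]$ with $g(x^{B_j})\neq g(x)$ for all $j$, and $bs_0(g)=\max\{bs(g,x): g(x)=0\}$. A 1-certificate is a partial assignment $c:S\to\{0,1\}$ such that $g$ equals 1 on every input agreeing with $c$ on $S$; $C(g,x)$ is the minimum $|S|$ over certificates (partial assignments on which $g$ is constant) agreeing with $x$, and $C_1(g)=\max\{C(g,x): g(x)=1\}$. *)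

theory Defs
  imports Complex_Main
begin

text \<open>Inputs in {0,1}^n are modelled as bool lists of length n (True = 1),
  a Boolean function on n variables as g :: bool list => bool together with n.\<close>

definition flip :: "nat set \<Rightarrow> bool list \<Rightarrow> bool list" where
  "flip S x = map (\<lambda>i. if i \<in> S then \<not> x ! i else x ! i) [0..<length x]"

definition sens :: "(bool list \<Rightarrow> bool) \<Rightarrow> bool list \<Rightarrow> nat" where
  "sens g x = card {i. i < length x \<and> g (flip {i} x) \<noteq> g x}"

definition s0 :: "nat \<Rightarrow> (bool list \<Rightarrow> bool) \<Rightarrow> nat" where
  "s0 n g = Sup {sens g x | x. length x = n \<and> \<not> g x}"

definition bsens :: "(bool list \<Rightarrow> bool) \<Rightarrow> bool list \<Rightarrow> nat" where
  "bsens g x = Sup {b. \<exists>B :: nat \<Rightarrow> nat set.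
      (\<forall>j<b. B j \<subseteq> {..<length x} \<and> g (flip (B j) x) \<noteq> g x) \<and>
      (\<forall>i<b. \<forall>j<b. i \<noteq> j \<longrightarrow> B i \<inter> B j = {})}"

definition bs0 :: "nat \<Rightarrow> (bool list \<Rightarrow> bool) \<Rightarrow> nat" where
  "bs0 n g = Sup {bsens g x | x. length x = n \<and> \<not> g x}"

definition is_cert :: "(bool list \<Rightarrow> bool) \<Rightarrow> bool list \<Rightarrow> nat set \<Rightarrow> bool" where
  "is_cert g x S \<longleftrightarrow> S \<subseteq> {..<length x} \<and>
     (\<forall>y. length y = length x \<and> (\<forall>i\<in>S. y ! i = x ! i) \<longrightarrow> g y = g x)"

definition cert :: "(bool list \<Rightarrow> bool) \<Rightarrow> bool list \<Rightarrow> nat" where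
  "cert g x = Inf {card S | S. is_cert g x S}"

definition C1 :: "nat \<Rightarrow> (bool list \<Rightarrow> bool) \<Rightarrow> nat" where
  "C1 n g = Sup {cert g x | x. length x = n \<and> g x}"

end

theory Submission
  imports Defs
begin

text \<open>The function is an OR of subcubes arranged in m groups; a group of width b consists
  of b cubes, the cube r fixing both coordinates of the pair r of the group to 1, the even
  coordinates of the other pairs of the group to 0, and the odd coordinates of the
  \<lfloor>b/2\<rfloor> pairs cyclically following r to 0. Two cubes of one group conflict in at
  least three coordinates, while flipping two different coordinates of a 0-input gives inputs
  differing in only two; so the sensitive coordinates of a 0-input lead into cubes of distinct
  groups, and s0 = m. The all-zero input is block sensitive to the ones of every cube separately, so
  bs0 is the number of cubes, made equal to k by widths \<lfloor>(k + i)/m\<rfloor>, i < m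
  (Hermite's identity). A 1-input is certified by a single cube, of size b + \<lfloor>b/2\<rfloor> + 1,
  and at the indicator of the ones of a widest cube every coordinate of that cube is needed.\<close>

lemma length_flip [simp]: "length (flip S x) = length x"
  by (simp add: flip_def)

lemma nth_flip [simp]: "i < length x \<Longrightarrow> flip S x ! i = (if i \<in> S then \<not> x ! i else x ! i)"
  by (simp add: flip_def)

definition bits :: "nat \<Rightarrow> nat set \<Rightarrow> bool list" where
  "bits n A = map (\<lambda>i. i \<in> A) [0..<n]"

lemma length_bits [simp]: "length (bits n A) = n"
  by (simp add: bits_def)

lemma nth_bits [simp]: "i < n \<Longrightarrow> bits n A ! i = (i \<in> A)"
  by (simp add: bits_def)

lemma flip_bits: "flip S (bits n A) = bits n ((A - S) \<union> (S - A))"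
  by (rule nth_equalityI) auto

lemma Sup_eq_attained:
  fixes h :: "'a \<Rightarrow> nat"
  assumes "\<And>x. P x \<Longrightarrow> h x \<le> v" and "P y" and "h y = v"
  shows "Sup {h x | x. P x} = v"
  by (rule cSup_eq_maximum) (use assms in auto)

definition sensitive_blocks ::
    "(bool list \<Rightarrow> bool) \<Rightarrow> bool list \<Rightarrow> nat \<Rightarrow> (nat \<Rightarrow> nat set) \<Rightarrow> bool" where
  "sensitive_blocks g x b B \<longleftrightarrow>
     (\<forall>j<b. B j \<subseteq> {..<length x} \<and> g (flip (B j) x) \<noteq> g x) \<and>
     (\<forall>i<b. \<forall>j<b. i \<noteq> j \<longrightarrow> B i \<inter> B j = {})"

lemma bsens_eq_Sup: "bsens g x = Sup {b. \<exists>B. sensitive_blocks g x b B}"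
  by (simp add: bsens_def sensitive_blocks_def)

lemma bsens_eqI:
  assumes "\<And>b B. sensitive_blocks g x b B \<Longrightarrow> b \<le> v" and "\<exists>B. sensitive_blocks g x v B"
  shows "bsens g x = v"
  unfolding bsens_eq_Sup by (rule cSup_eq_maximum) (use assms in auto)

lemma cert_le_card: "is_cert g x S \<Longrightarrow> cert g x \<le> card S"
  unfolding cert_def by (rule cInf_lower) auto

lemma cert_eqI:
  assumes "is_cert g x S" and "card S = v" and "\<And>S'. is_cert g x S' \<Longrightarrow> v \<le> card S'"
  shows "cert g x = v"
  unfolding cert_def by (rule cInf_eq_minimum) (use assms in auto)

locale subcube_dnf =
  fixes n :: nat and I :: "'i set" and ones zeros :: "'i \<Rightarrow> nat set"
  assumes finite_I: "finite I"
    and ones_zeros_disjoint: "t \<in> I \<Longrightarrow> ones t \<inter> zeros t = {}"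
    and cube_coords: "t \<in> I \<Longrightarrow> ones t \<union> zeros t \<subseteq> {..<n}"
begin

definition covers :: "bool list \<Rightarrow> 'i \<Rightarrow> bool" where
  "covers x t \<longleftrightarrow> (\<forall>i\<in>ones t. x ! i) \<and> (\<forall>i\<in>zeros t. \<not> x ! i)"

definition dnf :: "bool list \<Rightarrow> bool" where
  "dnf x \<longleftrightarrow> (\<exists>t\<in>I. covers x t)"

lemma covers_bits:
  assumes "t \<in> I" shows "covers (bits n A) t \<longleftrightarrow> ones t \<subseteq> A \<and> zeros t \<inter> A = {}"
proof -
  have "\<And>i. i \<in> ones t \<union> zeros t \<Longrightarrow> bits n A ! i = (i \<in> A)"
    using cube_coords[OF assms] by auto
  then show ?thesis by (auto simp: covers_def)
qed

lemma covers_eqI: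
  "covers x t \<Longrightarrow> \<forall>i\<in>ones t \<union> zeros t. y ! i = x ! i \<Longrightarrow> covers y t"
  by (simp add: covers_def)

lemma uncovered_coordinate:
  assumes "t \<in> I" "length y = n" "\<not> covers y t"
  obtains d where "d < n" "\<And>z. covers z t \<Longrightarrow> z ! d \<noteq> y ! d"
proof -
  from assms(3) obtain d where "(d \<in> ones t \<and> \<not> y ! d) \<or> (d \<in> zeros t \<and> y ! d)"
    by (auto simp: covers_def)
  with that cube_coords[OF assms(1)] show thesis by (auto simp: covers_def)
qed

lemma sensitive_blocks_le_card:
  assumes y: "length y = n" "\<not> dnf y" and B: "sensitive_blocks dnf y b B"
  shows "b \<le> card I"
proof -
  have "\<exists>t\<in>I. covers (flip (B j) y) t" if "j < b" for j
    using B that y(2) by (auto simp: sensitive_blocks_def dnf_def)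
  then obtain cube where cube: "\<And>j. j < b \<Longrightarrow> cube j \<in> I \<and> covers (flip (B j) y) (cube j)"
    by metis
  have "inj_on cube {..<b}"
  proof (rule inj_onI, rule ccontr)
    fix i j assume i: "i \<in> {..<b}" and j: "j \<in> {..<b}" and eq: "cube i = cube j" and "i \<noteq> j"
    then have disj: "B i \<inter> B j = {}" using B by (auto simp: sensitive_blocks_def)
    have "\<not> covers y (cube i)" using cube i y(2) by (auto simp: dnf_def)
    then obtain d where "d < n" and d: "\<And>z. covers z (cube i) \<Longrightarrow> z ! d \<noteq> y ! d"
      using uncovered_coordinate cube i y(1) by blast
    have "flip (B i) y ! d \<noteq> y ! d" "flip (B j) y ! d \<noteq> y ! d"
      using d cube i j eq by (metis lessThan_iff)+
    then have "d \<in> B i" "d \<in> B j" using \<open>d < n\<close> y(1) by (auto split: if_splits)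
    with disj show False by blast
  qed
  moreover have "cube ` {..<b} \<subseteq> I" using cube by auto
  ultimately show ?thesis using card_inj_on_le finite_I by fastforce
qed

lemma bsens_le_card: "length y = n \<Longrightarrow> \<not> dnf y \<Longrightarrow> bsens dnf y \<le> card I"
  unfolding bsens_eq_Sup
  by (rule cSup_least) (auto intro: sensitive_blocks_le_card simp: sensitive_blocks_def)

lemma not_dnf_bits_empty: "(\<And>t. t \<in> I \<Longrightarrow> ones t \<noteq> {}) \<Longrightarrow> \<not> dnf (bits n {})"
  by (auto simp: dnf_def covers_bits)

lemma bsens_bits_empty:
  assumes nonempty: "\<And>t. t \<in> I \<Longrightarrow> ones t \<noteq> {}"
    and disjoint: "\<And>t t'. t \<in> I \<Longrightarrow> t' \<in> I \<Longrightarrow> t \<noteq> t' \<Longrightarrow> ones t \<inter> ones t' = {}"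
  shows "bsens dnf (bits n {}) = card I"
proof (rule bsens_eqI)
  show "b \<le> card I" if "sensitive_blocks dnf (bits n {}) b B" for b B
    using sensitive_blocks_le_card[OF _ not_dnf_bits_empty[OF nonempty] that] by simp
  obtain h where h: "bij_betw h {..<card I} I"
    using ex_bij_betw_nat_finite finite_I lessThan_atLeast0 by metis
  have hI: "h j \<in> I" if "j < card I" for j
    using h that by (auto dest: bij_betwE)
  have "dnf (flip (ones (h j)) (bits n {}))" if "j < card I" for j
    using hI[OF that] ones_zeros_disjoint[OF hI[OF that]]
    by (auto simp: dnf_def flip_bits covers_bits)
  moreover have "ones (h i) \<inter> ones (h j) = {}" if "i < card I" "j < card I" "i \<noteq> j" for i j
    using that h hI disjoint by (metis bij_betw_iff_bijections lessThan_iff)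
  ultimately have "sensitive_blocks dnf (bits n {}) (card I) (\<lambda>j. ones (h j))"
    using hI cube_coords not_dnf_bits_empty[OF nonempty] by (auto simp: sensitive_blocks_def)
  then show "\<exists>B. sensitive_blocks dnf (bits n {}) (card I) B" by blast
qed

definition conflict :: "'i \<Rightarrow> 'i \<Rightarrow> nat set" where
  "conflict t t' = (ones t \<inter> zeros t') \<union> (zeros t \<inter> ones t')"

lemma conflict_subset_flipped:
  assumes "length y = n" "t \<in> I" "t' \<in> I"
    and "covers (flip {i} y) t" "covers (flip {i'} y) t'"
  shows "conflict t t' \<subseteq> {i, i'}"
proof
  fix d assume d: "d \<in> conflict t t'"
  then have "d < n" using cube_coords[OF assms(2)] by (auto simp: conflict_def)
  moreover have "flip {i} y ! d \<noteq> flip {i'} y ! d"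
    using d assms(4,5) by (auto simp: conflict_def covers_def)
  ultimately show "d \<in> {i, i'}" using assms(1) by (auto split: if_splits)
qed

lemma sens_le_card_groups:
  fixes group :: "'i \<Rightarrow> 'j"
  assumes far: "\<And>t t'. t \<in> I \<Longrightarrow> t' \<in> I \<Longrightarrow> t \<noteq> t' \<Longrightarrow> group t = group t' \<Longrightarrow>
      3 \<le> card (conflict t t')"
    and y: "length y = n" "\<not> dnf y"
  shows "sens dnf y \<le> card (group ` I)"
proof -
  define A where "A = {i. i < length y \<and> dnf (flip {i} y) \<noteq> dnf y}"
  have "\<exists>t\<in>I. covers (flip {i} y) t" if "i \<in> A" for i
    using that y(2) by (auto simp: A_def dnf_def)
  then obtain cube where cube: "\<And>i. i \<in> A \<Longrightarrow> cube i \<in> I \<and> covers (flip {i} y) (cube i)"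
    by metis
  have "inj_on (group \<circ> cube) A"
  proof (rule inj_onI, rule ccontr)
    fix i i' assume i: "i \<in> A" and i': "i' \<in> A" and eq: "(group \<circ> cube) i = (group \<circ> cube) i'"
      and "i \<noteq> i'"
    show False
    proof (cases "cube i = cube i'")
      case True
      have "\<not> covers y (cube i)" using cube i y(2) by (auto simp: dnf_def)
      then obtain d where "d < n" and d: "\<And>z. covers z (cube i) \<Longrightarrow> z ! d \<noteq> y ! d"
        using uncovered_coordinate cube i y(1) by blast
      have "flip {i} y ! d \<noteq> y ! d" "flip {i'} y ! d \<noteq> y ! d"
        using d cube i i' True by metis+
      then show False using \<open>d < n\<close> y(1) \<open>i \<noteq> i'\<close> by (auto split: if_splits)
    next
      case False
      then have "3 \<le> card (conflict (cube i) (cube i'))"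
        using far cube i i' eq by simp
      moreover have "card (conflict (cube i) (cube i')) \<le> card {i, i'}"
        using conflict_subset_flipped y(1) cube i i' by (intro card_mono) auto
      moreover have "card {i, i'} \<le> 2" by (simp add: card_insert_if)
      ultimately show False by linarith
    qed
  qed
  moreover have "(group \<circ> cube) ` A \<subseteq> group ` I" using cube by auto
  ultimately have "card A \<le> card (group ` I)"
    using card_inj_on_le finite_I by (metis finite_imageI)
  then show ?thesis by (simp add: sens_def A_def)
qed

lemma cube_is_cert:
  "t \<in> I \<Longrightarrow> length y = n \<Longrightarrow> covers y t \<Longrightarrow> is_cert dnf y (ones t \<union> zeros t)"
  using cube_coords by (auto simp: is_cert_def dnf_def intro: covers_eqI)

lemma cert_le_cube_size:
  assumes "length y = n" "dnf y" and "\<And>t. t \<in> I \<Longrightarrow> card (ones t \<union> zeros t) \<le> w"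
  shows "cert dnf y \<le> w"
proof -
  from assms(2) obtain t where "t \<in> I" "covers y t" by (auto simp: dnf_def)
  then show ?thesis
    using cert_le_card[OF cube_is_cert] assms(1,3) le_trans by blast
qed

text \<open>At the indicator of the ones of a cube t0, flipping any coordinate of t0 leaves
  t0, and cannot enter another cube having at least two ones outside those of t0.\<close>
lemma cert_bits_ones:
  assumes t0: "t0 \<in> I"
    and apart: "\<And>t. t \<in> I \<Longrightarrow> t \<noteq> t0 \<Longrightarrow> 2 \<le> card (ones t - ones t0)"
  shows "dnf (bits n (ones t0))" "cert dnf (bits n (ones t0)) = card (ones t0 \<union> zeros t0)"
proof -
  let ?y = "bits n (ones t0)"
  have "covers ?y t0" using t0 ones_zeros_disjoint by (auto simp: covers_bits)
  then show y: "dnf ?y" using t0 by (auto simp: dnf_def)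
  show "cert dnf ?y = card (ones t0 \<union> zeros t0)"
  proof (rule cert_eqI)
    show "is_cert dnf ?y (ones t0 \<union> zeros t0)" using cube_is_cert t0 \<open>covers ?y t0\<close> by simp
  next
    fix S assume S: "is_cert dnf ?y S"
    have "i \<in> S" if i: "i \<in> ones t0 \<union> zeros t0" for i
    proof (rule ccontr)
      assume "i \<notin> S"
      let ?A = "ones t0 - {i} \<union> ({i} - ones t0)"
      have "i < n" using i cube_coords t0 by auto
      have "\<forall>j\<in>S. flip {i} ?y ! j = ?y ! j"
        using S \<open>i \<notin> S\<close> by (auto simp: is_cert_def subset_iff)
      then have "dnf (flip {i} ?y)" using S y by (simp add: is_cert_def)
      then have "dnf (bits n ?A)" by (simp add: flip_bits)
      then obtain t where t: "t \<in> I" "ones t \<subseteq> ?A" "zeros t \<inter> ?A = {}"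
        by (auto simp: dnf_def covers_bits)
      show False
      proof (cases "t = t0")
        case True
        then show False using t i ones_zeros_disjoint[OF t0] by auto
      next
        case False
        have "ones t - ones t0 \<subseteq> {i}" using t(2) by auto
        then have "card (ones t - ones t0) \<le> 1"
          using card_mono[of "{i}"] by fastforce
        then show False using apart[OF t(1) False] by simp
      qed
    qed
    then have "ones t0 \<union> zeros t0 \<subseteq> S" by blast
    moreover have "finite S" using S finite_subset by (auto simp: is_cert_def)
    ultimately show "card (ones t0 \<union> zeros t0) \<le> card S" by (rule card_mono[rotated])
  qed simp
qed

end

definition cyclic_ahead :: "nat \<Rightarrow> nat \<Rightarrow> nat set" where
  "cyclic_ahead b r = (\<lambda>d. (r + d) mod b) ` {1..b div 2}"

lemma cyclic_ahead_subset: "0 < b \<Longrightarrow> cyclic_ahead b r \<subseteq> {..<b}"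
  by (auto simp: cyclic_ahead_def)

lemma self_notin_cyclic_ahead: "r < b \<Longrightarrow> r \<notin> cyclic_ahead b r"
proof
  assume "r < b" "r \<in> cyclic_ahead b r"
  then obtain d where d: "1 \<le> d" "d \<le> b div 2" "(r + d) mod b = r mod b"
    by (auto simp: cyclic_ahead_def)
  then have "b dvd r + d - r" using mod_eq_dvd_iff_nat[of r "r + d" b] by simp
  moreover have "0 < d" "d < b" using d by auto
  ultimately show False by (simp add: nat_dvd_not_less)
qed

lemma card_cyclic_ahead: "0 < b \<Longrightarrow> card (cyclic_ahead b r) = b div 2"
proof -
  assume "0 < b"
  have "d = d'" if "d \<in> {1..b div 2}" "d' \<in> {1..b div 2}" "(r + d) mod b = (r + d') mod b"
    "d' \<le> d" for d d'
  proof -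
    have "b dvd (r + d) - (r + d')" using that mod_eq_dvd_iff_nat[of "r + d'" "r + d" b] by simp
    moreover have "(r + d) - (r + d') < b" using that by auto
    ultimately have "d - d' = 0" using nat_dvd_not_less by (metis add_diff_cancel_left gr0I)
    then show ?thesis using that(4) by simp
  qed
  then have "inj_on (\<lambda>d. (r + d) mod b) {1..b div 2}"
    by (intro inj_onI) (metis nle_le)
  then show ?thesis by (simp add: cyclic_ahead_def card_image)
qed

lemma cyclic_ahead_either:
  assumes "r < b" "r' < b" "r \<noteq> r'"
  shows "r' \<in> cyclic_ahead b r \<or> r \<in> cyclic_ahead b r'"
proof -
  have "s' \<in> cyclic_ahead b s \<or> s \<in> cyclic_ahead b s'" if "s < s'" "s' < b" for s s'
  proof (cases "s' - s \<le> b div 2")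
    case True
    then have "s' = (s + (s' - s)) mod b" using that by simp
    then show ?thesis using True that unfolding cyclic_ahead_def by fastforce
  next
    case False
    then have "s = (s' + (b - (s' - s))) mod b" "b - (s' - s) \<in> {1..b div 2}" using that by auto
    then show ?thesis unfolding cyclic_ahead_def by fastforce
  qed
  then show ?thesis using assms by (metis linorder_neqE_nat)
qed

lemma sum_div_shift_eq:
  fixes m k :: nat
  assumes "0 < m"
  shows "(\<Sum>g<m. (k + g) div m) = k"
proof (induction k rule: less_induct)
  case (less k)
  show ?case
  proof (cases "k < m")
    case True
    have "(\<Sum>g<m. (k + g) div m) = (\<Sum>g<m. if m - k \<le> g then 1 else 0)"
      using True by (intro sum.cong) (auto simp: div_eq_0_iff intro!: div_nat_eqI)
    also have "\<dots> = card {m - k..<m}"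
      by (simp add: sum.If_cases Int_def atLeastLessThan_def lessThan_def conj_commute)
    finally show ?thesis using True by simp
  next
    case False
    then have "(k + g) div m = (k - m + g + m) div m" for g by simp
    then have "(k + g) div m = (k - m + g) div m + 1" for g using assms by simp
    then have "(\<Sum>g<m. (k + g) div m) = (\<Sum>g<m. (k - m + g) div m) + m"
      by (simp only: sum.distrib) simp
    also have "\<dots> = k" using less.IH[of "k - m"] assms False by simp
    finally show ?thesis .
  qed
qed

lemma ceiling_divide_of_nat:
  assumes "0 < m"
  shows "\<lceil>real k / real m\<rceil> = int ((k + m - 1) div m)"
proof (rule ceiling_unique)
  let ?q = "(k + m - 1) div m"
  have "m * ?q \<le> k + m - 1" "k + m - 1 < m * ?q + m"
    using assms by (simp_all add: mult.commute) (metis add.commute dividend_less_times_div)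
  then have "m * ?q < k + m" "k \<le> m * ?q" using assms by linarith+
  then have "real m * real ?q < real k + real m" "real k \<le> real m * real ?q"
    by (simp_all only: of_nat_mult[symmetric] of_nat_add[symmetric] of_nat_less_iff of_nat_le_iff)
  then show "real_of_int (int ?q) - 1 < real k / real m" "real k / real m \<le> real_of_int (int ?q)"
    using assms by (simp_all add: field_simps)
qed

locale cube_construction =
  fixes m :: nat and width :: "nat \<Rightarrow> nat"
  assumes m_pos: "0 < m"
    and width_pos: "g < m \<Longrightarrow> 0 < width g"
    and width_le: "g < m \<Longrightarrow> width g \<le> width 0"
begin

definition coord :: "nat \<Rightarrow> nat \<Rightarrow> nat" where
  "coord g r = 2 * (g * width 0 + r)"

definition n :: nat where
  "n = 2 * m * width 0"

definition cubes :: "(nat \<times> nat) set" where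
  "cubes = Sigma {..<m} (\<lambda>g. {..<width g})"

definition ones :: "nat \<times> nat \<Rightarrow> nat set" where
  "ones t = {coord (fst t) (snd t), Suc (coord (fst t) (snd t))}"

definition zeros :: "nat \<times> nat \<Rightarrow> nat set" where
  "zeros t = coord (fst t) ` ({..<width (fst t)} - {snd t}) \<union>
     (\<lambda>r. Suc (coord (fst t) r)) ` cyclic_ahead (width (fst t)) (snd t)"

lemma coord_eq_iff:
  "r < width 0 \<Longrightarrow> r' < width 0 \<Longrightarrow> coord g r = coord g' r' \<longleftrightarrow> g = g' \<and> r = r'"
proof
  assume r: "r < width 0" "r' < width 0" and "coord g r = coord g' r'"
  then have eq: "g * width 0 + r = g' * width 0 + r'" by (simp add: coord_def)
  have "(g * width 0 + r) div width 0 = g" "(g' * width 0 + r') div width 0 = g'"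
    using r by auto
  then show "g = g' \<and> r = r'" using eq by simp
qed simp


lemma coord_neq_Suc_coord: "coord g r \<noteq> Suc (coord g' r')"
  by (simp add: coord_def) presburger

lemma Suc_coord_less_n: "g < m \<Longrightarrow> r < width 0 \<Longrightarrow> Suc (coord g r) < n"
proof -
  assume "g < m" "r < width 0"
  then have "g * width 0 + r < Suc g * width 0" by simp
  also have "\<dots> \<le> m * width 0" using \<open>g < m\<close> by (intro mult_le_mono1) simp
  finally show ?thesis by (simp add: coord_def n_def)
qed

lemma mem_cubes [simp]: "(g, r) \<in> cubes \<longleftrightarrow> g < m \<and> r < width g"
  by (simp add: cubes_def)

lemma width_0_pos: "0 < width 0"
  using width_pos m_pos .

lemma cubes_less_width_0: "(g, r) \<in> cubes \<Longrightarrow> r < width 0"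
  using width_le by fastforce

lemma cyclic_ahead_less_width_0: "g < m \<Longrightarrow> r \<in> cyclic_ahead (width g) r' \<Longrightarrow> r < width 0"
  using cyclic_ahead_subset[OF width_pos] width_le by fastforce

lemma ones_zeros_disjoint: "t \<in> cubes \<Longrightarrow> ones t \<inter> zeros t = {}"
proof (cases t)
  case (Pair g r)
  assume "t \<in> cubes"
  then have gr: "g < m" "r < width g" "r < width 0" using Pair cubes_less_width_0 by auto
  have "coord g r \<noteq> coord g r'" if "r' < width g" "r' \<noteq> r" for r'
  proof -
    have "r' < width 0" using that(1) width_le[OF gr(1)] by simp
    then show ?thesis using that(2) gr(3) coord_eq_iff by simp
  qed
  moreover have "coord g r \<noteq> coord g r'" if "r' \<in> cyclic_ahead (width g) r" for r'
    using that gr self_notin_cyclic_ahead cyclic_ahead_less_width_0 coord_eq_iff[of r r' g g] by blast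
  ultimately show ?thesis
    using Pair coord_neq_Suc_coord coord_neq_Suc_coord[symmetric] by (auto simp: ones_def zeros_def)
qed

lemma cube_less_n: "t \<in> cubes \<Longrightarrow> ones t \<union> zeros t \<subseteq> {..<n}"
proof (cases t)
  case (Pair g r)
  assume "t \<in> cubes"
  then have gr: "g < m" "r < width g" using Pair by auto
  have lt: "Suc (coord g r') < n" if "r' < width g" for r'
    using that gr width_le Suc_coord_less_n by (meson order_less_le_trans)
  then have "coord g r' < n" if "r' < width g" for r'
    using that by (meson Suc_lessD)
  then show ?thesis using Pair gr lt cyclic_ahead_subset[OF width_pos[OF gr(1)]]
    by (auto simp: ones_def zeros_def)
qed

lemma finite_cubes: "finite cubes"
  by (simp add: cubes_def)

sublocale subcube_dnf n cubes ones zeros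
  using finite_cubes ones_zeros_disjoint cube_less_n by unfold_locales

lemma ones_disjoint:
  assumes "t \<in> cubes" "t' \<in> cubes" "t \<noteq> t'"
  shows "ones t \<inter> ones t' = {}"
proof -
  obtain g r g' r' where t: "t = (g, r)" "t' = (g', r')" by force
  then have "r < width 0" "r' < width 0" using assms cubes_less_width_0 by auto
  then have "coord g r \<noteq> coord g' r'" using assms(3) t coord_eq_iff by simp
  then show ?thesis
    using t coord_neq_Suc_coord coord_neq_Suc_coord[symmetric] by (auto simp: ones_def)
qed

lemma card_ones: "card (ones t) = 2"
  by (simp add: ones_def)

lemma card_zeros:
  assumes "(g, r) \<in> cubes"
  shows "card (zeros (g, r)) = (width g - 1) + width g div 2"
proof -
  have g: "g < m" and r: "r < width g" using assms by auto
  have "inj_on (coord g) {..<width g}"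
    using width_le[OF g] coord_eq_iff by (intro inj_onI) (meson lessThan_iff order_less_le_trans)
  then have "card (coord g ` ({..<width g} - {r})) = width g - 1"
    using r by (simp add: card_image inj_on_diff)
  moreover have "inj_on (\<lambda>r'. Suc (coord g r')) (cyclic_ahead (width g) r)"
    using cyclic_ahead_less_width_0[OF g] coord_eq_iff by (intro inj_onI) simp
  then have "card ((\<lambda>r'. Suc (coord g r')) ` cyclic_ahead (width g) r) = width g div 2"
    using card_cyclic_ahead[OF width_pos[OF g]] by (simp add: card_image)
  moreover have "coord g ` ({..<width g} - {r}) \<inter> (\<lambda>r'. Suc (coord g r')) ` cyclic_ahead (width g) r = {}"
    using coord_neq_Suc_coord by blast
  ultimately show ?thesis
    unfolding zeros_def fst_conv snd_conv
    by (subst card_Un_disjoint) (auto simp: cyclic_ahead_def)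
qed

lemma card_cube:
  assumes "(g, r) \<in> cubes"
  shows "card (ones (g, r) \<union> zeros (g, r)) = width g + width g div 2 + 1"
proof -
  have "finite (zeros (g, r))" using cube_less_n[OF assms] finite_subset by blast
  then have "card (ones (g, r) \<union> zeros (g, r)) = 2 + ((width g - 1) + width g div 2)"
    using ones_zeros_disjoint[OF assms] card_zeros[OF assms] card_ones
    by (simp add: card_Un_disjoint ones_def)
  then show ?thesis using width_pos assms by simp
qed

lemma conflict_in_group:
  assumes "(g, r) \<in> cubes" "(g, r') \<in> cubes" "r \<noteq> r'"
  shows "3 \<le> card (conflict (g, r) (g, r'))"
proof -
  have r: "r < width g" "r < width 0" and r': "r' < width g" "r' < width 0"
    using assms cubes_less_width_0 by auto
  obtain q where q: "q \<in> conflict (g, r) (g, r')" "q = Suc (coord g r) \<or> q = Suc (coord g r')"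
  proof (cases "r' \<in> cyclic_ahead (width g) r")
    case True
    then have "Suc (coord g r') \<in> conflict (g, r) (g, r')"
      by (auto simp: conflict_def ones_def zeros_def)
    then show thesis using that by blast
  next
    case False
    then have "r \<in> cyclic_ahead (width g) r'" using cyclic_ahead_either r r' assms(3) by blast
    then have "Suc (coord g r) \<in> conflict (g, r) (g, r')"
      by (auto simp: conflict_def ones_def zeros_def)
    then show thesis using that by blast
  qed
  have "{coord g r, coord g r', q} \<subseteq> conflict (g, r) (g, r')"
    using q r r' assms(3) by (auto simp: conflict_def ones_def zeros_def)
  moreover have "finite (conflict (g, r) (g, r'))"
    using cube_less_n[OF assms(1)] finite_subset by (fastforce simp: conflict_def)
  moreover have "card {coord g r, coord g r', q} = 3"
    using q(2) r r' assms(3) coord_eq_iff coord_neq_Suc_coord by auto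
  ultimately show ?thesis by (metis card_mono)
qed

lemma sens_le_m: "length y = n \<Longrightarrow> \<not> dnf y \<Longrightarrow> sens dnf y \<le> m"
proof -
  assume y: "length y = n" "\<not> dnf y"
  have "fst ` cubes = {..<m}"
    using width_pos by (force simp: cubes_def image_iff)
  moreover have "3 \<le> card (conflict t t')"
    if "t \<in> cubes" "t' \<in> cubes" "t \<noteq> t'" "fst t = fst t'" for t t'
    using that conflict_in_group by (metis prod.collapse prod.inject)
  ultimately show ?thesis using sens_le_card_groups[of fst, OF _ y] by simp
qed

text \<open>At the indicator of the first even coordinate of every group, flipping the odd
  coordinate next to it enters that group's cube indexed 0.\<close>
lemma sens_witness:
  defines "y \<equiv> bits n ((\<lambda>g. coord g 0) ` {..<m})"
  shows "\<not> dnf y" "sens dnf y = m"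
proof -
  let ?X = "(\<lambda>g. coord g 0) ` {..<m}"
  have odd_notin: "Suc (coord g r) \<notin> ?X" for g r
    using coord_neq_Suc_coord by (metis imageE)
  show ny: "\<not> dnf y"
    using odd_notin by (auto simp: y_def dnf_def covers_bits ones_def)
  have "Suc (coord g 0) \<in> {i. i < length y \<and> dnf (flip {i} y) \<noteq> dnf y}" if g: "g < m" for g
  proof -
    have idx: "(g, 0) \<in> cubes" using width_pos[OF g] g by simp
    have "flip {Suc (coord g 0)} y = bits n (insert (Suc (coord g 0)) ?X)"
    proof -
      have "?X - {Suc (coord g 0)} \<union> ({Suc (coord g 0)} - ?X) = insert (Suc (coord g 0)) ?X"
        using odd_notin by blast
      then show ?thesis by (simp add: y_def flip_bits)
    qed
    moreover have "x \<notin> insert (Suc (coord g 0)) ?X" if "x \<in> zeros (g, 0)" for x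
    proof -
      from that consider (even) r where "r < width g" "r \<noteq> 0" "x = coord g r"
        | (odd) r where "r \<in> cyclic_ahead (width g) 0" "x = Suc (coord g r)"
        by (auto simp: zeros_def)
      then show ?thesis
      proof cases
        case even
        then have "coord g r \<notin> ?X" using width_le[OF g] width_0_pos coord_eq_iff by auto
        then show ?thesis using even coord_neq_Suc_coord by simp
      next
        case odd
        then have "r \<noteq> 0" using self_notin_cyclic_ahead[OF width_pos[OF g]] by metis
        then have "Suc (coord g r) \<noteq> Suc (coord g 0)"
          using odd width_0_pos cyclic_ahead_less_width_0[OF g] coord_eq_iff by simp
        then show ?thesis using odd odd_notin by simp
      qed
    qed
    ultimately have "covers (flip {Suc (coord g 0)} y) (g, 0)"
      using g by (auto simp: covers_bits[OF idx] ones_def)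
    then have "dnf (flip {Suc (coord g 0)} y)"
      using idx by (auto simp: dnf_def)
    moreover have "Suc (coord g 0) < n" using Suc_coord_less_n g width_0_pos by simp
    ultimately show ?thesis using ny by (simp add: y_def)
  qed
  then have "(\<lambda>g. Suc (coord g 0)) ` {..<m} \<subseteq> {i. i < length y \<and> dnf (flip {i} y) \<noteq> dnf y}"
    by blast
  moreover have "inj_on (\<lambda>g. Suc (coord g 0)) {..<m}"
    using coord_eq_iff width_0_pos by (intro inj_onI) simp
  ultimately have "card ((\<lambda>g. Suc (coord g 0)) ` {..<m}) \<le> sens dnf y"
    unfolding sens_def by (intro card_mono) auto
  then have "m \<le> sens dnf y"
    using \<open>inj_on (\<lambda>g. Suc (coord g 0)) {..<m}\<close> by (simp add: card_image)
  moreover have "sens dnf y \<le> m" using sens_le_m ny by (simp add: y_def)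
  ultimately show "sens dnf y = m" by linarith
qed

lemma s0_eq: "s0 n dnf = m"
  unfolding s0_def using sens_witness sens_le_m by (intro Sup_eq_attained) auto

lemma card_cubes: "card cubes = (\<Sum>g<m. width g)"
  by (simp add: cubes_def)

lemma bs0_eq: "bs0 n dnf = (\<Sum>g<m. width g)"
proof -
  have "\<not> dnf (bits n {})" using not_dnf_bits_empty by (simp add: ones_def)
  moreover have "bsens dnf (bits n {}) = card cubes"
    using ones_disjoint by (intro bsens_bits_empty) (simp_all add: ones_def)
  ultimately show ?thesis
    unfolding bs0_def card_cubes[symmetric] using bsens_le_card by (intro Sup_eq_attained) auto
qed

lemma C1_eq: "C1 n dnf = width 0 + width 0 div 2 + 1"
proof -
  have idx: "(0, 0) \<in> cubes" using m_pos width_0_pos by simp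
  have apart: "2 \<le> card (ones t - ones (0, 0))" if "t \<in> cubes" "t \<noteq> (0, 0)" for t
    using ones_disjoint[OF that(1) idx that(2)] card_ones by (simp add: Diff_triv)
  have "card (ones t \<union> zeros t) \<le> width 0 + width 0 div 2 + 1" if "t \<in> cubes" for t
  proof -
    obtain g r where t: "t = (g, r)" by force
    with that have "width g \<le> width 0" "width g div 2 \<le> width 0 div 2"
      using width_le div_le_mono by auto
    then show ?thesis using card_cube that t by simp
  qed
  then have "cert dnf y \<le> width 0 + width 0 div 2 + 1" if "length y = n" "dnf y" for y
    using that by (intro cert_le_cube_size)
  then show ?thesis
    unfolding C1_def using cert_bits_ones[OF idx apart] card_cube[OF idx]
    by (intro Sup_eq_attained[where y = "bits n (ones (0, 0))"]) auto
qed

end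

theorem theorem1:
  fixes m k :: nat
  assumes "0 < m" and "m \<le> k"
  shows "\<exists>n. \<exists>g :: bool list \<Rightarrow> bool.
           s0 n g = m \<and> bs0 n g = k \<and>
           int (C1 n g) = \<lfloor>3 * real_of_int \<lceil>real k / real m\<rceil> / 2\<rfloor> + 1"
proof -
  define width where "width g = (k + (m - Suc g)) div m" for g
  interpret cube_construction m width
  proof
    show "0 < width g" if "g < m" for g
      using assms by (simp add: width_def div_greater_zero_iff)
    show "width g \<le> width 0" if "g < m" for g
      using that by (simp add: width_def div_le_mono)
  qed (fact assms(1))
  have "bs0 n dnf = k"
    using bs0_eq sum.nat_diff_reindex[of "\<lambda>g. (k + g) div m"] sum_div_shift_eq[OF assms(1)]
    by (simp add: width_def)
  moreover have "\<lfloor>3 * real_of_int \<lceil>real k / real m\<rceil> / 2\<rfloor> = int (width 0 + width 0 div 2)"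
  proof -
    have "\<lceil>real k / real m\<rceil> = int (width 0)"
      using ceiling_divide_of_nat[OF assms(1)] assms(1) by (simp add: width_def)
    then have "\<lfloor>3 * real_of_int \<lceil>real k / real m\<rceil> / 2\<rfloor> = int (3 * width 0 div 2)"
      using floor_divide_of_nat_eq[of "3 * width 0" 2] by simp
    then show ?thesis by simp
  qed
  ultimately show ?thesis
    using s0_eq C1_eq by (intro exI[of _ n] exI[of _ dnf]) simp
qed

end
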